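(* In the setting of the context, suppose $G_2$ is a $p$-group and $S$ is a simple $KH_1$-module with $H_1'=H_1$, $G_1'=H_1$ and $H_1\subsetneq H_1^2\subsetneq G_2$. Then $H_1$ is not cyclic of order $p$.
   Context: $K$ is algebraically closed of characteristic zero; $G_2$ is a finite group with normal subgroups $G_1$, $H_2$, and $H_1=G_1\cap H_2$, all normal in $G_2$, with $G_2=G_1H_2$ and $[G_2:G_1]=[H_2:H_1]=p$. For a normal subgroup $N$ of a group $X$, an $N$-module $W$ and $x\in X$, ${}^xW$ is $W$ with action $n\cdot w=(x^{-1}nx)w$, and $I_X(W)=\{x\in X:{}^xW\cong W\}$. For a simple $KH_1$-module $S$: $H_1'=I_{H_2}(S)$, $G_1'=I_{G_1}(S)$, $H_1^2=I_{G_2}(S)$. *)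

theory Defs
  imports "HOL-Algebra.Coset" "HOL-Algebra.Generated_Groups"
    "HOL-Computational_Algebra.Polynomial" "Jordan_Normal_Form.Matrix"
begin

definition alg_closed :: "'k::field itself \<Rightarrow> bool" where
  "alg_closed TYPE('k) \<longleftrightarrow> (\<forall>q::'k poly. degree q > 0 \<longrightarrow> (\<exists>x. poly q x = 0))"

(* A d-dimensional K N-module, N a subgroup (carrier set) of G, given by a
   representation rho : N -> GL_d(K) *)
definition is_rep :: "('a,'b) monoid_scheme \<Rightarrow> 'a set \<Rightarrow> nat \<Rightarrow> ('a \<Rightarrow> 'k::field mat) \<Rightarrow> bool" where
  "is_rep G N d \<rho> \<longleftrightarrow> (\<forall>h\<in>N. \<rho> h \<in> carrier_mat d d) \<and>
     (\<forall>h\<in>N. \<forall>h'\<in>N. \<rho> (h \<otimes>\<^bsub>G\<^esub> h') = \<rho> h * \<rho> h') \<and> \<rho> \<one>\<^bsub>G\<^esub> = 1\<^sub>m d"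

definition submodule_rep :: "'a set \<Rightarrow> nat \<Rightarrow> ('a \<Rightarrow> 'k::field mat) \<Rightarrow> 'k vec set \<Rightarrow> bool" where
  "submodule_rep N d \<rho> W \<longleftrightarrow> W \<subseteq> carrier_vec d \<and> 0\<^sub>v d \<in> W \<and>
     (\<forall>v\<in>W. \<forall>w\<in>W. v + w \<in> W) \<and> (\<forall>c. \<forall>v\<in>W. c \<cdot>\<^sub>v v \<in> W) \<and>
     (\<forall>h\<in>N. \<forall>v\<in>W. \<rho> h *\<^sub>v v \<in> W)"

definition simple_rep :: "('a,'b) monoid_scheme \<Rightarrow> 'a set \<Rightarrow> nat \<Rightarrow> ('a \<Rightarrow> 'k::field mat) \<Rightarrow> bool" where
  "simple_rep G N d \<rho> \<longleftrightarrow> is_rep G N d \<rho> \<and> d > 0 \<and>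
     (\<forall>W. submodule_rep N d \<rho> W \<longrightarrow> W = {0\<^sub>v d} \<or> W = carrier_vec d)"

definition iso_rep :: "'a set \<Rightarrow> nat \<Rightarrow> ('a \<Rightarrow> 'k::field mat) \<Rightarrow> ('a \<Rightarrow> 'k mat) \<Rightarrow> bool" where
  "iso_rep N d \<rho> \<sigma> \<longleftrightarrow> (\<exists>P \<in> carrier_mat d d. invertible_mat P \<and> (\<forall>h\<in>N. P * \<rho> h = \<sigma> h * P))"

definition conj_rep :: "('a,'b) monoid_scheme \<Rightarrow> 'a \<Rightarrow> ('a \<Rightarrow> 'k mat) \<Rightarrow> ('a \<Rightarrow> 'k mat)" where
  "conj_rep G x \<rho> = (\<lambda>n. \<rho> (inv\<^bsub>G\<^esub> x \<otimes>\<^bsub>G\<^esub> n \<otimes>\<^bsub>G\<^esub> x))"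

definition inertia :: "('a,'b) monoid_scheme \<Rightarrow> 'a set \<Rightarrow> nat \<Rightarrow> ('a \<Rightarrow> 'k::field mat) \<Rightarrow> 'a set \<Rightarrow> 'a set" where
  "inertia G N d \<rho> X = {x \<in> X. iso_rep N d (conj_rep G x \<rho>) \<rho>}"

end

theory Submission
  imports Defs "HOL-Algebra.Multiplicative_Group" "HOL-Number_Theory.Residues"
begin

text \<open>A normal subgroup \<open>\<langle>g\<rangle>\<close> of prime order \<open>p\<close> in a finite \<open>p\<close>-group is central:
  conjugation by \<open>x\<close> sends \<open>g\<close> to some \<open>g^k\<close>, hence conjugation by \<open>x^m\<close> sends it to
  \<open>g^(k^m)\<close>; taking \<open>m = |G| = p^n\<close> gives \<open>k^(p^n) \<equiv> 1\<close>, while Fermat gives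
  \<open>k^(p^n) \<equiv> k\<close> (mod \<open>p\<close>), so \<open>k \<equiv> 1\<close>. Hence every conjugate of a representation of a
  central \<open>H\<^sub>1\<close> coincides with it, and the inertia group of \<open>S\<close> would be all of \<open>G\<^sub>2\<close>.\<close>

lemma cong_pow_prime_self:
  fixes p k :: nat assumes "prime p"
  shows "[k ^ p = k] (mod p)"
proof (cases "p dvd k")
  case True
  then have "p dvd k ^ p"
    using assms prime_gt_0_nat dvd_power dvd_trans by blast
  with True show ?thesis by (simp add: cong_def dvd_eq_mod_eq_0)
next
  case False
  have "[k * k ^ (p - 1) = k * 1] (mod p)"
    using fermat_theorem[OF assms False] by (rule cong_scalar_left)
  moreover have "k * k ^ (p - 1) = k ^ p"
    using assms prime_gt_0_nat by (metis Suc_diff_1 power_Suc)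
  ultimately show ?thesis by simp
qed

lemma cong_pow_prime_power_self:
  fixes p k :: nat assumes "prime p"
  shows "[k ^ (p ^ n) = k] (mod p)"
proof (induction n)
  case 0 then show ?case by simp
next
  case (Suc n)
  have "k ^ (p ^ Suc n) = (k ^ (p ^ n)) ^ p"
    by (metis power_Suc power_mult mult.commute)
  then have "[k ^ (p ^ Suc n) = k ^ (p ^ n)] (mod p)"
    using cong_pow_prime_self[OF assms] by simp
  then show ?case using Suc cong_trans by blast
qed

context group
begin

lemma nat_pow_eq_iff_cong_ord:
  assumes "x \<in> carrier G"
  shows "x [^] (m::nat) = x [^] (n::nat) \<longleftrightarrow> [m = n] (mod ord x)"
proof -
  have "x [^] m = x [^] n \<longleftrightarrow> x [^] int m = x [^] int n"
    by (simp add: int_pow_int)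
  also have "\<dots> \<longleftrightarrow> int (ord x) dvd int n - int m"
    using int_pow_eq[OF assms] .
  also have "\<dots> \<longleftrightarrow> [int n = int m] (mod int (ord x))"
    by (simp add: cong_iff_dvd_diff)
  also have "\<dots> \<longleftrightarrow> [m = n] (mod ord x)"
    by (simp add: cong_int_iff cong_sym_eq)
  finally show ?thesis .
qed

lemma conj_nat_pow:
  assumes "x \<in> carrier G" "h \<in> carrier G"
  shows "inv x \<otimes> h [^] (i::nat) \<otimes> x = (inv x \<otimes> h \<otimes> x) [^] i"
proof (induction i)
  case 0
  then show ?case using assms by simp
next
  case (Suc i)
  have "inv x \<otimes> h [^] Suc i \<otimes> x = (inv x \<otimes> h [^] i \<otimes> x) \<otimes> (inv x \<otimes> h \<otimes> x)"
    using assms by (simp add: m_assoc) (simp add: m_assoc[symmetric])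
  also have "\<dots> = (inv x \<otimes> h \<otimes> x) [^] Suc i"
    using Suc by simp
  finally show ?case .
qed

lemma conj_nat_pow_conj:
  assumes x: "x \<in> carrier G" and g: "g \<in> carrier G"
    and k: "inv x \<otimes> g \<otimes> x = g [^] (k::nat)"
  shows "inv (x [^] (m::nat)) \<otimes> g \<otimes> x [^] m = g [^] (k ^ m)"
proof (induction m)
  case 0
  then show ?case using g by simp
next
  case (Suc m)
  have "inv (x [^] Suc m) \<otimes> g \<otimes> x [^] Suc m
      = inv x \<otimes> (inv (x [^] m) \<otimes> g \<otimes> x [^] m) \<otimes> x"
    using x g by (simp add: inv_mult_group m_assoc)
  also have "\<dots> = (g [^] k) [^] (k ^ m)"
    using Suc conj_nat_pow[OF x g] k by simp
  also have "\<dots> = g [^] (k ^ Suc m)"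
    using g by (simp add: nat_pow_pow mult.commute)
  finally show ?case .
qed

lemma conj_fixes_generator_of_prime_order:
  assumes fin: "finite (carrier G)" and p: "prime p"
    and order: "card (carrier G) = p ^ n"
    and g: "g \<in> carrier G" and ord_g: "ord g = p"
    and x: "x \<in> carrier G" and conj_in: "inv x \<otimes> g \<otimes> x \<in> generate G {g}"
  shows "inv x \<otimes> g \<otimes> x = g"
proof -
  obtain k :: nat where k: "inv x \<otimes> g \<otimes> x = g [^] k"
    using conj_in generate_pow_on_finite_carrier[OF fin g] by blast
  have "x [^] Coset.order G = \<one>"
    using pow_order_eq_1[OF x] .
  then have "g [^] (k ^ (p ^ n)) = g [^] (1::nat)"
    using conj_nat_pow_conj[OF x g k, of "Coset.order G"] g order
    by (simp add: Coset.order_def)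
  then have "[k ^ (p ^ n) = 1] (mod p)"
    using nat_pow_eq_iff_cong_ord[OF g, of "k ^ (p ^ n)" 1] ord_g by blast
  then have "[k = 1] (mod p)"
    using cong_pow_prime_power_self[OF p, of k n] by (metis cong_sym cong_trans)
  then have "g [^] k = g"
    using nat_pow_eq_iff_cong_ord[OF g, of k 1] ord_g g by simp
  then show ?thesis using k by simp
qed

lemma normal_cyclic_of_prime_order_central:
  assumes fin: "finite (carrier G)" and p: "prime p"
    and order: "card (carrier G) = p ^ n"
    and H: "H \<lhd> G" and card_H: "card H = p"
    and g: "g \<in> H" and H_gen: "H = generate G {g}"
    and x: "x \<in> carrier G" and y: "y \<in> H"
  shows "inv x \<otimes> y \<otimes> x = y"
proof -
  have g_carrier: "g \<in> carrier G"
    using H g normal_imp_subgroup subgroup.subset by blast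
  have "ord g = p"
    using generate_pow_card[OF g_carrier] H_gen card_H by simp
  moreover have "inv x \<otimes> g \<otimes> x \<in> generate G {g}"
    using normal.inv_op_closed1[OF H x g] H_gen by simp
  ultimately have conj_g: "inv x \<otimes> g \<otimes> x = g"
    using conj_fixes_generator_of_prime_order[OF fin p order g_carrier _ x] by blast
  obtain i :: nat where "y = g [^] i"
    using y H_gen generate_pow_on_finite_carrier[OF fin g_carrier] by blast
  then show ?thesis
    using conj_nat_pow[OF x g_carrier, of i] conj_g by simp
qed

end

lemma inertia_eq_if_conj_trivial:
  fixes G (structure) and \<rho> :: "'a \<Rightarrow> 'k::field mat"
  assumes rep: "is_rep G N d \<rho>"
    and trivial: "\<And>x h. x \<in> X \<Longrightarrow> h \<in> N \<Longrightarrow> inv x \<otimes> h \<otimes> x = h"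
  shows "inertia G N d \<rho> X = X"
proof -
  have "iso_rep N d (conj_rep G x \<rho>) \<rho>" if x: "x \<in> X" for x
    unfolding iso_rep_def conj_rep_def
  proof (intro bexI[of _ "1\<^sub>m d"] conjI ballI)
    show "invertible_mat (1\<^sub>m d :: 'k mat)"
      unfolding invertible_mat_def inverts_mat_def by (auto intro!: exI[of _ "1\<^sub>m d"])
  next
    fix h assume h: "h \<in> N"
    then have "\<rho> h \<in> carrier_mat d d"
      using rep by (simp add: is_rep_def)
    then show "1\<^sub>m d * \<rho> (inv x \<otimes> h \<otimes> x) = \<rho> h * 1\<^sub>m d"
      using trivial[OF x h] by simp
  qed simp
  then show ?thesis unfolding inertia_def by auto
qed

theorem mainTheorem14:
  fixes G :: "('a,'b) monoid_scheme" (structure)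
    and G1 H2 H1 :: "'a set" and p :: nat
    and d :: nat and \<rho> :: "'a \<Rightarrow> 'k::field_char_0 mat"
  assumes K: "alg_closed TYPE('k)"
    and grp: "group G" and fin: "finite (carrier G)"
    and p: "prime p" and pgrp: "\<exists>n. card (carrier G) = p ^ n"
    and G1: "G1 \<lhd> G" and H2: "H2 \<lhd> G" and H1def: "H1 = G1 \<inter> H2" and H1: "H1 \<lhd> G"
    and prod: "carrier G = G1 <#> H2"
    and idx1: "card (carrier G) = p * card G1"
    and idx2: "card H2 = p * card H1"
    and S: "simple_rep G H1 d \<rho>"
    and I1: "inertia G H1 d \<rho> H2 = H1"
    and I2: "inertia G H1 d \<rho> G1 = H1"
    and I3: "H1 \<subset> inertia G H1 d \<rho> (carrier G)"
    and I4: "inertia G H1 d \<rho> (carrier G) \<subset> carrier G"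
  shows "\<not> (card H1 = p \<and> (\<exists>g\<in>H1. H1 = generate G {g}))"
proof
  assume "card H1 = p \<and> (\<exists>g\<in>H1. H1 = generate G {g})"
  then obtain g where card_H1: "card H1 = p" and g: "g \<in> H1" and H1_gen: "H1 = generate G {g}"
    by blast
  obtain n where order: "card (carrier G) = p ^ n"
    using pgrp by blast
  have "inertia G H1 d \<rho> (carrier G) = carrier G"
  proof (rule inertia_eq_if_conj_trivial)
    show "is_rep G H1 d \<rho>"
      using S by (simp add: simple_rep_def)
    show "inv x \<otimes> h \<otimes> x = h" if "x \<in> carrier G" "h \<in> H1" for x h
      using group.normal_cyclic_of_prime_order_central[OF grp fin p order H1 card_H1 g H1_gen that] .
  qed
  with I4 show False by simp
qed

end
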